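(* The restrictions $\rho(x_1),\dots,\rho(x_N)$ are algebraically independent generators of the coordinate algebra $F[S]$ of the affine subspace $S=f+V\subseteq\mathfrak{g}_e^*$.
   Context: $F$ is an algebraically closed field of characteristic zero; $\lambda=(\lambda_1,\dots,\lambda_n)$ is a composition of $N$ with positive parts and $\lambda_1\le\cdots\le\lambda_n$; $s_{i,j}:=\lambda_j-\min(\lambda_i,\lambda_j)$. $e\in\mathfrak{gl}_N(F)$ is the nilpotent matrix with Jordan blocks $\lambda_1,\dots,\lambda_n$ down the diagonal and $\mathfrak{g}_e$ its centralizer. With the diagram whose row $i$ has $\lambda_i$ boxes, filled with $1,\dots,N$ along rows, and $\mathrm{row}(h),\mathrm{col}(h)$ the row/column of $h$, set $e_{i,j;r}:=\sum_{\mathrm{row}(h)=i,\mathrm{row}(k)=j,\mathrm{col}(k)-\mathrm{col}(h)=r}e_{h,k}$ for $s_{i,j}\le r<\lambda_j$; these form a basis of $\mathfrak{g}_e$. Let $\{f_{i,j;r}\}$ be the dual basis of $\mathfrak{g}_e^*$. Identify $S(\mathfrak{g}_e)$ with the coordinate algebra $F[\mathfrak{g}_e^*]$. Let $f:=f_{1,2;\lambda_2-1}+f_{2,3;\lambda_3-1}+\cdots+f_{n-1,n;\lambda_n-1}$, let $V$ be the span of $\{f_{n,i;r}:1\le i\le n,\ 0\le r<\lambda_i\}$, $S:=f+V$, and $\rho:F[\mathfrak{g}_e^*]\to F[S]$ restriction of functions. $(d_1,\dots,d_N)$ consists of $\lambda_n$ copies of $1$, then $\lambda_{n-1}$ copies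 of $2$, ..., then $\lambda_1$ copies of $n$. For $\mu\subseteq\lambda$ ($0\le\mu_i\le\lambda_i$), $|\mu|=\sum\mu_i$, $\ell(\mu)$ = number of nonzero parts. For $r=1,\dots,N$ with $d=d_r$, $x_r:=\sum_{\mu\subseteq\lambda,\ |\mu|=r,\ \ell(\mu)=d}\sum_{w\in S_d}\mathrm{sgn}(w)\,e_{i_{w1},i_1;\mu_{i_1}-1}\cdots e_{i_{wd},i_d;\mu_{i_d}-1}\in S(\mathfrak{g}_e)$, where $i_1<\cdots<i_d$ are the positions of the nonzero entries of $\mu$. *)

theory Defs
  imports "HOL-Computational_Algebra.Polynomial" "HOL-Library.Poly_Mapping"
    "HOL-Combinatorics.Permutations"
begin

type_synonym ('v, 'a) mpoly = "('v \<Rightarrow>\<^sub>0 nat) \<Rightarrow>\<^sub>0 'a"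

definition mp_const :: "'a::comm_ring_1 \<Rightarrow> ('v, 'a) mpoly" where
  "mp_const c = Poly_Mapping.single 0 c"

definition mp_var :: "'v \<Rightarrow> ('v, 'a::comm_ring_1) mpoly" where
  "mp_var v = Poly_Mapping.single (Poly_Mapping.single v 1) 1"

definition mp_vars :: "('v, 'a::zero) mpoly \<Rightarrow> 'v set" where
  "mp_vars p = \<Union> (Poly_Mapping.keys ` Poly_Mapping.keys p)"

definition mp_subst :: "('v \<Rightarrow> ('w, 'a::comm_ring_1) mpoly) \<Rightarrow> ('v, 'a) mpoly \<Rightarrow> ('w, 'a) mpoly" where
  "mp_subst \<sigma> p = (\<Sum>m\<in>Poly_Mapping.keys p. mp_const (Poly_Mapping.lookup p m) * (\<Prod>v\<in>Poly_Mapping.keys m. \<sigma> v ^ Poly_Mapping.lookup m v))"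

text \<open>lam i is lambda_i for 1 <= i <= n.\<close>
definition sij :: "(nat \<Rightarrow> nat) \<Rightarrow> nat \<Rightarrow> nat \<Rightarrow> nat" where
  "sij lam i j = lam j - min (lam i) (lam j)"

text \<open>S(g_e) = F[g_e^*] is the polynomial ring in the basis vectors e_{i,j;r}
  (s_{i,j} <= r < lambda_j), modelled with variables (i,j,r).
  Convention: e_{i,j;r} = 0 for r outside [s_{i,j}, lambda_j).\<close>
definition e_elt :: "(nat \<Rightarrow> nat) \<Rightarrow> nat \<Rightarrow> nat \<Rightarrow> nat \<Rightarrow> (nat \<times> nat \<times> nat, 'a::comm_ring_1) mpoly" where
  "e_elt lam i j r = (if sij lam i j \<le> r \<and> r < lam j then mp_var (i, j, r) else 0)"

definition bigN :: "(nat \<Rightarrow> nat) \<Rightarrow> nat \<Rightarrow> nat" where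
  "bigN lam n = (\<Sum>i=1..n. lam i)"

definition dseq :: "(nat \<Rightarrow> nat) \<Rightarrow> nat \<Rightarrow> nat list" where
  "dseq lam n = concat (map (\<lambda>d. replicate (lam (n + 1 - d)) d) [1..<n+1])"

definition dr :: "(nat \<Rightarrow> nat) \<Rightarrow> nat \<Rightarrow> nat \<Rightarrow> nat" where
  "dr lam n r = dseq lam n ! (r - 1)"

definition subcomps :: "(nat \<Rightarrow> nat) \<Rightarrow> nat \<Rightarrow> (nat \<Rightarrow> nat) set" where
  "subcomps lam n = {\<mu>. (\<forall>i\<in>{1..n}. \<mu> i \<le> lam i) \<and> (\<forall>i. i \<notin> {1..n} \<longrightarrow> \<mu> i = 0)}"

definition msize :: "nat \<Rightarrow> (nat \<Rightarrow> nat) \<Rightarrow> nat" where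
  "msize n \<mu> = (\<Sum>i=1..n. \<mu> i)"

definition mpos :: "nat \<Rightarrow> (nat \<Rightarrow> nat) \<Rightarrow> nat set" where
  "mpos n \<mu> = {i\<in>{1..n}. \<mu> i \<noteq> 0}"

definition mlen :: "nat \<Rightarrow> (nat \<Rightarrow> nat) \<Rightarrow> nat" where
  "mlen n \<mu> = card (mpos n \<mu>)"

text \<open>x_r in S(g_e). The positions i_1 < ... < i_d are the entries of the sorted list
  "is" (0-indexed: i_{k+1} = is ! k), and S_d is realised as permutations of {0..<d}.\<close>
definition xr :: "(nat \<Rightarrow> nat) \<Rightarrow> nat \<Rightarrow> nat \<Rightarrow> (nat \<times> nat \<times> nat, 'a::comm_ring_1) mpoly" where
  "xr lam n r =
     (let d = dr lam n r in
      \<Sum>\<mu> \<in> {\<mu> \<in> subcomps lam n. msize n \<mu> = r \<and> mlen n \<mu> = d}.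
        (let is = sorted_list_of_set (mpos n \<mu>) in
         \<Sum>w \<in> {w. w permutes {0..<d}}.
           of_int (sign w) * (\<Prod>k<d. e_elt lam (is ! (w k)) (is ! k) (\<mu> (is ! k) - 1))))"

text \<open>F[S] for S = f + V: the polynomial ring in the affine coordinates t_{b,r}
  (1 <= b <= n, 0 <= r < lambda_b) of the point f + sum t_{b,r} f_{n,b;r}.
  The restriction rho sends e_{a,b;r} to its value at that point, i.e. to
  [a<n, b=a+1, r=lambda_b - 1] + [a=n] t_{b,r}.\<close>
definition rho_var :: "(nat \<Rightarrow> nat) \<Rightarrow> nat \<Rightarrow> nat \<times> nat \<times> nat \<Rightarrow> (nat \<times> nat, 'a::comm_ring_1) mpoly" where
  "rho_var lam n v = (case v of (a, b, r) \<Rightarrow>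
      mp_const (if 1 \<le> a \<and> a < n \<and> b = a + 1 \<and> r = lam b - 1 then 1 else 0)
      + (if a = n \<and> 1 \<le> b \<and> b \<le> n \<and> r < lam b then mp_var (b, r) else 0))"

definition rho :: "(nat \<Rightarrow> nat) \<Rightarrow> nat \<Rightarrow> (nat \<times> nat \<times> nat, 'a::comm_ring_1) mpoly \<Rightarrow> (nat \<times> nat, 'a) mpoly" where
  "rho lam n = mp_subst (rho_var lam n)"

definition Scoords :: "(nat \<Rightarrow> nat) \<Rightarrow> nat \<Rightarrow> (nat \<times> nat) set" where
  "Scoords lam n = {(b, r). 1 \<le> b \<and> b \<le> n \<and> r < lam b}"

definition Phi :: "(nat \<Rightarrow> nat) \<Rightarrow> nat \<Rightarrow> (nat, 'a::comm_ring_1) mpoly \<Rightarrow> (nat \<times> nat, 'a) mpoly" where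
  "Phi lam n = mp_subst (\<lambda>k. if k \<in> {1..bigN lam n} then rho lam n (xr lam n k) else 0)"

end

(*
  On S the restriction rho sends e_{a,j;u} to 1 if j = a + 1 and u = lambda_j - 1, to the
  coordinate t_{j,u} if a = n, and to 0 otherwise. Hence a term of x_r, indexed by mu and w,
  survives restriction only if the positions i_1 < ... < i_d of mu form the block
  n + 1 - d, ..., n, w is the cycle k |-> k - 1, and mu agrees with lambda on that block
  except at its first entry. For d = d_r the size condition |mu| = r fixes that entry, so
  exactly one term survives and rho(x_r) = +-t_{b,m-1} with b = n + 1 - d_r and
  m = r - (lambda_{b+1} + ... + lambda_n). As r |-> (b, m - 1) is a bijection from
  {1, ..., N} onto the coordinates of S, rho(x_1), ..., rho(x_N) are the coordinate
  functions of S up to sign. Nothing beyond a commutative coefficient ring is used.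
*)
theory Submission
  imports Defs
begin

section \<open>Substitution in multivariate polynomials\<close>

definition mp_monom_subst :: "('v \<Rightarrow> ('w, 'a::comm_ring_1) mpoly) \<Rightarrow> ('v \<Rightarrow>\<^sub>0 nat) \<Rightarrow> ('w, 'a) mpoly" where
  "mp_monom_subst \<sigma> m = (\<Prod>v\<in>Poly_Mapping.keys m. \<sigma> v ^ Poly_Mapping.lookup m v)"

lemma mp_monom_subst_superset:
  assumes "finite T" "Poly_Mapping.keys m \<subseteq> T"
  shows "mp_monom_subst \<sigma> m = (\<Prod>v\<in>T. \<sigma> v ^ Poly_Mapping.lookup m v)"
  unfolding mp_monom_subst_def
  by (rule prod.mono_neutral_left) (use assms in \<open>auto simp: in_keys_iff\<close>)

lemma mp_monom_subst_add: "mp_monom_subst \<sigma> (m1 + m2) = mp_monom_subst \<sigma> m1 * mp_monom_subst \<sigma> m2"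
proof -
  let ?T = "Poly_Mapping.keys m1 \<union> Poly_Mapping.keys m2"
  have "mp_monom_subst \<sigma> (m1 + m2) = (\<Prod>v\<in>?T. \<sigma> v ^ Poly_Mapping.lookup (m1 + m2) v)"
    by (rule mp_monom_subst_superset) (use keys_add[of m1 m2] in auto)
  also have "\<dots> = (\<Prod>v\<in>?T. \<sigma> v ^ Poly_Mapping.lookup m1 v) * (\<Prod>v\<in>?T. \<sigma> v ^ Poly_Mapping.lookup m2 v)"
    by (simp add: lookup_add power_add prod.distrib)
  also have "\<dots> = mp_monom_subst \<sigma> m1 * mp_monom_subst \<sigma> m2"
    by (simp add: mp_monom_subst_superset[where T="?T"])
  finally show ?thesis .
qed

lemma mp_const_0 [simp]: "mp_const 0 = 0"
  by (simp add: mp_const_def)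

lemma mp_const_1 [simp]: "mp_const 1 = 1"
  by (simp add: mp_const_def)

lemma mp_const_add: "mp_const (a + b) = mp_const a + mp_const b"
  by (simp add: mp_const_def single_add)

lemma mp_const_mult: "mp_const (a * b) = mp_const a * mp_const b"
  by (simp add: mp_const_def mult_single)

lemma mp_subst_monoms:
  "mp_subst \<sigma> p = (\<Sum>m\<in>Poly_Mapping.keys p. mp_const (Poly_Mapping.lookup p m) * mp_monom_subst \<sigma> m)"
  by (simp add: mp_subst_def mp_monom_subst_def)

lemma mp_subst_superset:
  assumes "finite S" "Poly_Mapping.keys p \<subseteq> S"
  shows "mp_subst \<sigma> p = (\<Sum>m\<in>S. mp_const (Poly_Mapping.lookup p m) * mp_monom_subst \<sigma> m)"
  unfolding mp_subst_monoms
  by (rule sum.mono_neutral_left) (use assms in \<open>auto simp: in_keys_iff mp_const_def\<close>)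

lemma mp_subst_add: "mp_subst \<sigma> (p + q) = mp_subst \<sigma> p + mp_subst \<sigma> q"
proof -
  let ?S = "Poly_Mapping.keys p \<union> Poly_Mapping.keys q"
  have "mp_subst \<sigma> (p + q) = (\<Sum>m\<in>?S. mp_const (Poly_Mapping.lookup (p + q) m) * mp_monom_subst \<sigma> m)"
    by (rule mp_subst_superset) (use keys_add[of p q] in auto)
  also have "\<dots> = (\<Sum>m\<in>?S. mp_const (Poly_Mapping.lookup p m) * mp_monom_subst \<sigma> m)
      + (\<Sum>m\<in>?S. mp_const (Poly_Mapping.lookup q m) * mp_monom_subst \<sigma> m)"
    by (simp add: lookup_add mp_const_add distrib_right sum.distrib)
  also have "\<dots> = mp_subst \<sigma> p + mp_subst \<sigma> q"
    by (simp add: mp_subst_superset[where S="?S"])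
  finally show ?thesis .
qed

lemma mp_subst_single: "mp_subst \<sigma> (Poly_Mapping.single m c) = mp_const c * mp_monom_subst \<sigma> m"
  by (subst mp_subst_superset[of "{m}"]) auto

lemma mp_subst_zero [simp]: "mp_subst \<sigma> 0 = 0"
  by (simp add: mp_subst_def)

lemma mp_subst_sum: "mp_subst \<sigma> (\<Sum>i\<in>I. f i) = (\<Sum>i\<in>I. mp_subst \<sigma> (f i))"
  by (induction I rule: infinite_finite_induct) (auto simp: mp_subst_add)

lemma poly_mapping_sum_single:
  "p = (\<Sum>m\<in>Poly_Mapping.keys p. Poly_Mapping.single m (Poly_Mapping.lookup p m))"
  by (rule poly_mapping_eqI) (auto simp: lookup_sum lookup_single when_def in_keys_iff
      intro!: sum.neutral trans[OF _ sum.remove[symmetric]])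

lemma mp_subst_mult: "mp_subst \<sigma> (p * q) = mp_subst \<sigma> p * mp_subst \<sigma> q"
proof -
  let ?P = "Poly_Mapping.keys p" and ?Q = "Poly_Mapping.keys q"
  let ?a = "Poly_Mapping.lookup p" and ?b = "Poly_Mapping.lookup q"
  have "p * q = (\<Sum>m\<in>?P. Poly_Mapping.single m (?a m)) * (\<Sum>m'\<in>?Q. Poly_Mapping.single m' (?b m'))"
    using poly_mapping_sum_single[of p] poly_mapping_sum_single[of q] by simp
  also have "\<dots> = (\<Sum>m\<in>?P. \<Sum>m'\<in>?Q. Poly_Mapping.single (m + m') (?a m * ?b m'))"
    by (simp add: sum_product mult_single)
  finally have "mp_subst \<sigma> (p * q)
      = (\<Sum>m\<in>?P. \<Sum>m'\<in>?Q. mp_const (?a m * ?b m') * mp_monom_subst \<sigma> (m + m'))"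
    by (simp add: mp_subst_sum mp_subst_single)
  also have "\<dots> = (\<Sum>m\<in>?P. \<Sum>m'\<in>?Q.
      (mp_const (?a m) * mp_monom_subst \<sigma> m) * (mp_const (?b m') * mp_monom_subst \<sigma> m'))"
    by (simp add: mp_const_mult mp_monom_subst_add algebra_simps)
  also have "\<dots> = mp_subst \<sigma> p * mp_subst \<sigma> q"
    by (simp add: mp_subst_monoms sum_product)
  finally show ?thesis .
qed

lemma mp_subst_of_int [simp]: "mp_subst \<sigma> (of_int k) = of_int k"
  using mp_subst_single[of \<sigma> 0 "of_int k"] by (simp add: mp_const_def mp_monom_subst_def)

lemma mp_subst_var [simp]: "mp_subst \<sigma> (mp_var v) = \<sigma> v"
  by (simp add: mp_var_def mp_subst_single mp_const_def mp_monom_subst_def)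

lemma mp_subst_one [simp]: "mp_subst \<sigma> 1 = 1"
  using mp_subst_of_int[of \<sigma> 1] by simp

lemma mp_subst_prod: "mp_subst \<sigma> (\<Prod>i\<in>I. f i) = (\<Prod>i\<in>I. mp_subst \<sigma> (f i))"
  by (induction I rule: infinite_finite_induct) (auto simp: mp_subst_mult)

lemma mp_subst_power: "mp_subst \<sigma> (p ^ k) = mp_subst \<sigma> p ^ k"
  using mp_subst_prod[of \<sigma> "\<lambda>_. p" "{..<k}"] by simp

lemma mp_subst_cong:
  assumes "\<And>v. v \<in> mp_vars p \<Longrightarrow> \<sigma> v = \<sigma>' v"
  shows "mp_subst \<sigma> p = mp_subst \<sigma>' p"
proof -
  have "\<forall>m\<in>Poly_Mapping.keys p. \<forall>v\<in>Poly_Mapping.keys m. \<sigma> v = \<sigma>' v"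
    using assms unfolding mp_vars_def by blast
  then show ?thesis
    unfolding mp_subst_def by (intro sum.cong refl arg_cong2[where f="(*)"] prod.cong) auto
qed

lemma mp_monom_subst_var: "mp_monom_subst mp_var m = (Poly_Mapping.single m 1 :: ('v, 'a::comm_ring_1) mpoly)"
proof -
  have var_power: "mp_var v ^ j = (Poly_Mapping.single (Poly_Mapping.single v j) 1 :: ('v, 'a) mpoly)" for v j
    by (induction j) (auto simp: mp_var_def mult_single single_add[symmetric])
  have prod_single: "(\<Prod>v\<in>K. Poly_Mapping.single (f v) (1::'a)) = Poly_Mapping.single (\<Sum>v\<in>K. f v) 1"
    for K and f :: "'v \<Rightarrow> 'v \<Rightarrow>\<^sub>0 nat"
    by (induction K rule: infinite_finite_induct) (auto simp: mult_single)
  have "mp_monom_subst mp_var m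
      = (\<Prod>v\<in>Poly_Mapping.keys m. Poly_Mapping.single (Poly_Mapping.single v (Poly_Mapping.lookup m v)) (1::'a))"
    by (simp add: mp_monom_subst_def var_power)
  also have "\<dots> = Poly_Mapping.single (\<Sum>v\<in>Poly_Mapping.keys m. Poly_Mapping.single v (Poly_Mapping.lookup m v)) 1"
    by (rule prod_single)
  also have "\<dots> = Poly_Mapping.single m 1"
    by (simp flip: poly_mapping_sum_single)
  finally show ?thesis .
qed

lemma mp_subst_var_id [simp]: "mp_subst mp_var p = p"
  by (subst (2) poly_mapping_sum_single[of p])
    (simp add: mp_subst_monoms mp_monom_subst_var mp_const_def mult_single)

lemma mp_subst_const [simp]: "mp_subst \<sigma> (mp_const c) = mp_const c"
  by (simp add: mp_const_def mp_subst_single mp_monom_subst_def)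

lemma mp_subst_comp: "mp_subst \<tau> (mp_subst \<sigma> p) = mp_subst (\<lambda>v. mp_subst \<tau> (\<sigma> v)) p"
  unfolding mp_subst_monoms[of \<sigma>] mp_subst_monoms[of "\<lambda>v. mp_subst \<tau> (\<sigma> v)"]
  by (simp add: mp_subst_sum mp_subst_mult mp_subst_prod mp_subst_power mp_monom_subst_def)

lemma mp_vars_add: "mp_vars (p + q) \<subseteq> mp_vars p \<union> mp_vars q"
  unfolding mp_vars_def using keys_add[of p q] by blast

lemma mp_vars_mult: "mp_vars (p * q) \<subseteq> mp_vars p \<union> mp_vars q"
proof
  fix v assume "v \<in> mp_vars (p * q)"
  then obtain m where m: "m \<in> Poly_Mapping.keys (p * q)" "v \<in> Poly_Mapping.keys m"
    by (auto simp: mp_vars_def)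
  then obtain a b where "m = a + b" "a \<in> Poly_Mapping.keys p" "b \<in> Poly_Mapping.keys q"
    using keys_mult[of p q] by blast
  then show "v \<in> mp_vars p \<union> mp_vars q"
    using m(2) keys_add[of a b] by (auto simp: mp_vars_def)
qed

lemma mp_vars_of_int [simp]: "mp_vars (of_int k :: ('v, 'a::comm_ring_1) mpoly) = {}"
  by (simp flip: single_of_int add: mp_vars_def)

lemma mp_vars_var: "mp_vars (mp_var v :: ('v, 'a::comm_ring_1) mpoly) \<subseteq> {v}"
  by (simp add: mp_vars_def mp_var_def)

lemma mp_vars_sum: "mp_vars (\<Sum>i\<in>I. f i) \<subseteq> (\<Union>i\<in>I. mp_vars (f i))"
  by (induction I rule: infinite_finite_induct) (use mp_vars_add in \<open>fastforce simp: mp_vars_def\<close>)+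

lemma mp_vars_prod: "mp_vars (\<Prod>i\<in>I. f i :: ('v, 'a::comm_ring_1) mpoly) \<subseteq> (\<Union>i\<in>I. mp_vars (f i))"
  by (induction I rule: infinite_finite_induct) (use mp_vars_mult in \<open>fastforce simp: mp_vars_def\<close>)+

lemma mp_vars_power: "mp_vars (p ^ k :: ('v, 'a::comm_ring_1) mpoly) \<subseteq> mp_vars p"
  by (induction k) (use mp_vars_mult in \<open>fastforce simp: mp_vars_def\<close>)+

lemma mp_vars_const [simp]: "mp_vars (mp_const c) = {}"
  by (simp add: mp_vars_def mp_const_def)

lemma mp_vars_subst: "mp_vars (mp_subst \<sigma> p) \<subseteq> (\<Union>v\<in>mp_vars p. mp_vars (\<sigma> v))"
proof -
  have monom: "mp_vars (mp_const c * mp_monom_subst \<sigma> m) \<subseteq> (\<Union>v\<in>Poly_Mapping.keys m. mp_vars (\<sigma> v))"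
    for c m
  proof -
    have "mp_vars (mp_const c * mp_monom_subst \<sigma> m) \<subseteq> mp_vars (mp_monom_subst \<sigma> m)"
      using mp_vars_mult[of "mp_const c"] by simp
    also have "\<dots> \<subseteq> (\<Union>v\<in>Poly_Mapping.keys m. mp_vars (\<sigma> v ^ Poly_Mapping.lookup m v))"
      unfolding mp_monom_subst_def by (rule mp_vars_prod)
    also have "\<dots> \<subseteq> (\<Union>v\<in>Poly_Mapping.keys m. mp_vars (\<sigma> v))"
      by (intro UN_mono order.refl mp_vars_power)
    finally show ?thesis .
  qed
  have "mp_vars (mp_subst \<sigma> p)
      \<subseteq> (\<Union>m\<in>Poly_Mapping.keys p. mp_vars (mp_const (Poly_Mapping.lookup p m) * mp_monom_subst \<sigma> m))"
    unfolding mp_subst_monoms by (rule mp_vars_sum)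
  also have "\<dots> \<subseteq> (\<Union>m\<in>Poly_Mapping.keys p. \<Union>v\<in>Poly_Mapping.keys m. mp_vars (\<sigma> v))"
    using monom by (intro UN_mono) auto
  also have "\<dots> = (\<Union>v\<in>mp_vars p. mp_vars (\<sigma> v))"
    by (auto simp: mp_vars_def)
  finally show ?thesis .
qed

lemma mp_subst_inverse:
  assumes "\<And>v. v \<in> mp_vars p \<Longrightarrow> mp_subst \<tau> (\<sigma> v) = mp_var v"
  shows "mp_subst \<tau> (mp_subst \<sigma> p) = p"
  using mp_subst_cong[of p "\<lambda>v. mp_subst \<tau> (\<sigma> v)" mp_var] assms by (simp add: mp_subst_comp)

lemma mp_subst_signed_renaming:
  fixes \<sigma> :: "'v \<Rightarrow> ('w, 'a::comm_ring_1) mpoly"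
  assumes bij: "bij_betw \<pi> A B"
    and \<sigma>: "\<And>v. v \<in> A \<Longrightarrow> \<sigma> v = of_int (s v) * mp_var (\<pi> v)"
    and s: "\<And>v. v \<in> A \<Longrightarrow> s v \<in> {1, -1}"
  shows "\<And>p. mp_vars p \<subseteq> A \<Longrightarrow> mp_subst \<sigma> p = 0 \<Longrightarrow> p = 0"
    and "\<And>q. mp_vars q \<subseteq> B \<Longrightarrow> \<exists>p. mp_vars p \<subseteq> A \<and> mp_subst \<sigma> p = q"
proof -
  define \<iota> where "\<iota> = inv_into A \<pi>"
  define \<tau> :: "'w \<Rightarrow> ('v, 'a) mpoly" where "\<tau> w = of_int (s (\<iota> w)) * mp_var (\<iota> w)" for w
  have \<iota>: "\<iota> w \<in> A" "\<pi> (\<iota> w) = w" if "w \<in> B" for w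
    using that bij by (auto simp: \<iota>_def bij_betw_def inv_into_into f_inv_into_f)
  have sign_sq: "of_int (s v) * (of_int (s v) * x) = x" if "v \<in> A" for v and x :: "('u, 'a) mpoly"
  proof -
    have "of_int (s v) * of_int (s v) = (1 :: ('u, 'a) mpoly)"
      using s[OF that] by (auto simp flip: of_int_mult)
    then show ?thesis by (simp flip: mult.assoc)
  qed
  have \<tau>\<sigma>: "mp_subst \<tau> (\<sigma> v) = mp_var v" if "v \<in> A" for v
  proof -
    have "\<iota> (\<pi> v) = v" using that bij by (simp add: \<iota>_def bij_betw_inv_into_left)
    then show ?thesis using that sign_sq by (simp add: \<sigma> \<tau>_def mp_subst_mult)
  qed
  have \<sigma>\<tau>: "mp_subst \<sigma> (\<tau> w) = mp_var w" if "w \<in> B" for w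
    using \<iota>[OF that] sign_sq by (simp add: \<tau>_def \<sigma> mp_subst_mult)
  show "p = 0" if "mp_vars p \<subseteq> A" "mp_subst \<sigma> p = 0" for p
    using mp_subst_inverse[of p \<tau> \<sigma>] that \<tau>\<sigma> by auto
  show "\<exists>p. mp_vars p \<subseteq> A \<and> mp_subst \<sigma> p = q" if q: "mp_vars q \<subseteq> B" for q
  proof (intro exI conjI)
    have "mp_vars (\<tau> w) \<subseteq> {\<iota> w}" for w
      using mp_vars_mult[of "of_int _" "mp_var (\<iota> w)"] mp_vars_var[of "\<iota> w"] by (auto simp: \<tau>_def)
    then show "mp_vars (mp_subst \<tau> q) \<subseteq> A"
      using mp_vars_subst[of \<tau> q] q \<iota> by blast
    show "mp_subst \<sigma> (mp_subst \<tau> q) = q"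
      using q \<sigma>\<tau> by (blast intro: mp_subst_inverse)
  qed
qed

section \<open>Indexing the coordinates of \<open>S\<close> by \<open>1, \<dots>, N\<close>\<close>

definition tail_sum :: "(nat \<Rightarrow> nat) \<Rightarrow> nat \<Rightarrow> nat \<Rightarrow> nat" where
  "tail_sum lam n d = (\<Sum>j\<in>{n + 1 - d..n}. lam j)"

lemma tail_sum_0 [simp]: "tail_sum lam n 0 = 0"
  by (simp add: tail_sum_def)

lemma tail_sum_Suc: "d < n \<Longrightarrow> tail_sum lam n (Suc d) = lam (n - d) + tail_sum lam n d"
proof -
  assume "d < n"
  then have "{n + 1 - Suc d..n} = insert (n - d) {n + 1 - d..n}" by auto
  then show ?thesis using \<open>d < n\<close> by (simp add: tail_sum_def)
qed

lemma tail_sum_n: "tail_sum lam n n = bigN lam n"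
  by (simp add: tail_sum_def bigN_def)

lemma tail_sum_mono: "d \<le> d' \<Longrightarrow> tail_sum lam n d \<le> tail_sum lam n d'"
  unfolding tail_sum_def by (rule sum_mono2) auto

definition dseq_blocks :: "(nat \<Rightarrow> nat) \<Rightarrow> nat \<Rightarrow> nat \<Rightarrow> nat list" where
  "dseq_blocks lam n k = concat (map (\<lambda>d. replicate (lam (n + 1 - d)) d) [1..<k + 1])"

lemma dseq_blocks_0 [simp]: "dseq_blocks lam n 0 = []"
  by (simp add: dseq_blocks_def)

lemma dseq_blocks_Suc:
  "dseq_blocks lam n (Suc k) = dseq_blocks lam n k @ replicate (lam (n - k)) (Suc k)"
  by (simp add: dseq_blocks_def)

lemma length_dseq_blocks: "k \<le> n \<Longrightarrow> length (dseq_blocks lam n k) = tail_sum lam n k"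
  by (induction k) (auto simp: dseq_blocks_Suc tail_sum_Suc)

lemma nth_dseq_blocks:
  assumes "k \<le> n" "1 \<le> d" "d \<le> k" "tail_sum lam n (d - 1) \<le> i" "i < tail_sum lam n d"
  shows "dseq_blocks lam n k ! i = d"
  using assms
proof (induction k)
  case 0
  then show ?case by simp
next
  case (Suc k)
  have len: "length (dseq_blocks lam n k) = tail_sum lam n k"
    using Suc.prems by (simp add: length_dseq_blocks)
  show ?case
  proof (cases "d \<le> k")
    case True
    then have "i < length (dseq_blocks lam n k)"
      using Suc.prems tail_sum_mono[OF True, of lam n] len by simp
    then show ?thesis using Suc True by (simp add: dseq_blocks_Suc nth_append)
  next
    case False
    then have "d = Suc k" using Suc.prems by simp
    then show ?thesis
      using Suc.prems len tail_sum_Suc[of k n lam] by (simp add: dseq_blocks_Suc nth_append)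
  qed
qed

lemma dr_eqI:
  assumes "1 \<le> d" "d \<le> n" "tail_sum lam n (d - 1) < r" "r \<le> tail_sum lam n d"
  shows "dr lam n r = d"
proof -
  have "dseq lam n = dseq_blocks lam n n"
    by (simp add: dseq_def dseq_blocks_def)
  then show ?thesis
    using nth_dseq_blocks[of n n d lam "r - 1"] assms by (simp add: dr_def)
qed

lemma dr_bounds:
  assumes "r \<in> {1..bigN lam n}"
  shows "1 \<le> dr lam n r" "dr lam n r \<le> n"
    and "tail_sum lam n (dr lam n r - 1) < r" "r \<le> tail_sum lam n (dr lam n r)"
proof -
  define d where "d = (LEAST d. r \<le> tail_sum lam n d)"
  have ex: "r \<le> tail_sum lam n n" using assms by (simp add: tail_sum_n)
  have upper: "r \<le> tail_sum lam n d" unfolding d_def by (rule LeastI[of _ n]) (rule ex)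
  have "d \<le> n" unfolding d_def by (rule Least_le) (rule ex)
  moreover have "d \<noteq> 0"
  proof
    assume "d = 0"
    then show False using upper assms by simp
  qed
  moreover have "\<not> r \<le> tail_sum lam n (d - 1)"
    unfolding d_def by (rule not_less_Least) (use \<open>d \<noteq> 0\<close> in \<open>simp add: d_def\<close>)
  ultimately have "dr lam n r = d" and "1 \<le> d" "d \<le> n" "tail_sum lam n (d - 1) < r"
    using upper by (auto intro: dr_eqI)
  then show "1 \<le> dr lam n r" "dr lam n r \<le> n"
      "tail_sum lam n (dr lam n r - 1) < r" "r \<le> tail_sum lam n (dr lam n r)"
    using upper by simp_all
qed

definition coord_of_index :: "(nat \<Rightarrow> nat) \<Rightarrow> nat \<Rightarrow> nat \<Rightarrow> nat \<times> nat" where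
  "coord_of_index lam n r = (n + 1 - dr lam n r, r - tail_sum lam n (dr lam n r - 1) - 1)"

definition index_of_coord :: "(nat \<Rightarrow> nat) \<Rightarrow> nat \<Rightarrow> nat \<times> nat \<Rightarrow> nat" where
  "index_of_coord lam n = (\<lambda>(b, t). tail_sum lam n (n - b) + t + 1)"

lemma bij_betw_coord_of_index:
  "bij_betw (coord_of_index lam n) {1..bigN lam n} (Scoords lam n)"
proof -
  have index_coord: "coord_of_index lam n r \<in> Scoords lam n \<and> index_of_coord lam n (coord_of_index lam n r) = r"
    if r: "r \<in> {1..bigN lam n}" for r
  proof -
    define d where "d = dr lam n r"
    have d: "1 \<le> d" "d \<le> n" "tail_sum lam n (d - 1) < r" "r \<le> tail_sum lam n d"
      using dr_bounds[OF r] by (simp_all add: d_def)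
    have "tail_sum lam n d = lam (n + 1 - d) + tail_sum lam n (d - 1)"
      using tail_sum_Suc[of "d - 1" n lam] d by (simp add: Suc_diff_Suc)
    then show ?thesis
      using d by (auto simp: coord_of_index_def index_of_coord_def Scoords_def d_def[symmetric])
  qed
  have coord_index: "index_of_coord lam n v \<in> {1..bigN lam n} \<and> coord_of_index lam n (index_of_coord lam n v) = v"
    if v: "v \<in> Scoords lam n" for v
  proof -
    obtain b t where v: "v = (b, t)" "1 \<le> b" "b \<le> n" "t < lam b"
      using v by (auto simp: Scoords_def)
    have step: "tail_sum lam n (n + 1 - b) = lam b + tail_sum lam n (n - b)"
      using tail_sum_Suc[of "n - b" n lam] v by (simp add: Suc_diff_le)
    have dr: "dr lam n (index_of_coord lam n v) = n + 1 - b"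
      using v step by (intro dr_eqI) (auto simp: index_of_coord_def)
    have "tail_sum lam n (n + 1 - b) \<le> bigN lam n"
      using tail_sum_mono[of "n + 1 - b" n lam n] v by (simp add: tail_sum_n)
    then show ?thesis
      using v dr step by (auto simp: coord_of_index_def index_of_coord_def)
  qed
  show ?thesis
    by (rule bij_betw_byWitness[where f' = "index_of_coord lam n"]) (use index_coord coord_index in auto)
qed

section \<open>The terms of \<open>x\<^sub>r\<close> that survive on \<open>S\<close>\<close>

lemma rho_e_elt:
  assumes pos: "\<forall>i\<in>{1..n}. 0 < lam i"
    and mono: "\<forall>i j. 1 \<le> i \<longrightarrow> i \<le> j \<longrightarrow> j \<le> n \<longrightarrow> lam i \<le> lam j"
    and a: "a \<in> {1..n}" and j: "j \<in> {1..n}" and u: "1 \<le> u" "u \<le> lam j"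
  shows "rho lam n (e_elt lam a j (u - 1)) =
    (if a = n then mp_var (j, u - 1) else if j = a + 1 \<and> u = lam j then 1 else 0)"
proof (cases "a = n")
  case True
  have "lam j \<le> lam n" using mono j by auto
  then show ?thesis using True u j by (auto simp: rho_def e_elt_def rho_var_def sij_def)
next
  case False
  have "sij lam a j \<le> u - 1" if "j = a + 1" "u = lam j"
  proof -
    have "0 < lam a" "lam a \<le> lam j" using pos mono a j that by auto
    then show ?thesis using that by (simp add: sij_def)
  qed
  then show ?thesis using False a j u by (auto simp: rho_def e_elt_def rho_var_def)
qed

definition xr_term :: "(nat \<Rightarrow> nat) \<Rightarrow> nat \<Rightarrow> nat \<Rightarrow> (nat \<Rightarrow> nat) \<Rightarrow> (nat \<Rightarrow> nat)
    \<Rightarrow> (nat \<times> nat \<times> nat, 'a::comm_ring_1) mpoly" where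
  "xr_term lam n d \<mu> w =
     (let is = sorted_list_of_set (mpos n \<mu>) in \<Prod>k<d. e_elt lam (is ! w k) (is ! k) (\<mu> (is ! k) - 1))"

lemma xr_eq_sum_xr_term:
  "xr lam n r = (\<Sum>\<mu> \<in> {\<mu> \<in> subcomps lam n. msize n \<mu> = r \<and> mlen n \<mu> = dr lam n r}.
      \<Sum>w \<in> {w. w permutes {0..<dr lam n r}}. of_int (sign w) * xr_term lam n (dr lam n r) \<mu> w)"
  by (simp add: xr_def xr_term_def Let_def)

lemma rho_xr_term:
  "rho lam n (xr_term lam n d \<mu> w) =
     (let is = sorted_list_of_set (mpos n \<mu>) in \<Prod>k<d. rho lam n (e_elt lam (is ! w k) (is ! k) (\<mu> (is ! k) - 1)))"
  by (simp add: xr_term_def Let_def rho_def mp_subst_prod)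

definition down_cycle :: "nat \<Rightarrow> nat \<Rightarrow> nat" where
  "down_cycle d k = (if k = 0 then d - 1 else if k < d then k - 1 else k)"

lemma down_cycle_permutes: "down_cycle d permutes {0..<d}"
proof (rule inj_imp_permutes)
  show "inj_on (down_cycle d) {0..<d}"
    by (rule inj_onI) (auto simp: down_cycle_def split: if_splits)
qed (auto simp: down_cycle_def)

lemma upt_eq_if_consecutive:
  assumes len: "length xs = d" and d: "0 < d" and last: "xs ! (d - 1) = n"
    and step: "\<And>k. 0 < k \<Longrightarrow> k < d \<Longrightarrow> xs ! k = Suc (xs ! (k - 1))"
  shows "xs = [n + 1 - d..<n + 1]"
proof -
  have nth: "xs ! k = xs ! 0 + k" if "k < d" for k
    using that
  proof (induction k)
    case (Suc k)
    then show ?case using step[of "Suc k"] by simp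
  qed simp
  from nth[of "d - 1"] have first: "xs ! 0 + (d - 1) = n" using last d by simp
  show ?thesis
  proof (rule nth_equalityI)
    show "length xs = length [n + 1 - d..<n + 1]" using len first d by simp
    fix k assume "k < length xs"
    then show "xs ! k = [n + 1 - d..<n + 1] ! k"
      using nth[of k] first len by (simp del: upt_Suc)
  qed
qed

lemma permutation_forced_down_cycle:
  fixes xs :: "nat list"
  assumes sorted: "sorted_wrt (<) xs" and len: "length xs = d" and d: "0 < d"
    and bound: "set xs \<subseteq> {..n}" and w: "w permutes {0..<d}"
    and step: "\<And>k. k < d \<Longrightarrow> xs ! w k = n \<or> xs ! k = Suc (xs ! w k)"
  shows "w = down_cycle d" and "xs = [n + 1 - d..<n + 1]"
proof -
  have less_iff: "xs ! i < xs ! j \<longleftrightarrow> i < j" if "i < d" "j < d" for i j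
    using sorted_wrt_nth_less[OF sorted] that len by (metis less_asym linorder_neqE_nat)
  have w_less: "w k < d" if "k < d" for k
    using permutes_in_image[OF w] that by simp
  have "xs ! (d - 1) \<in> set xs" using len d by simp
  then have last_le: "xs ! (d - 1) \<le> n" using bound by blast
  have top: "w k = d - 1" if "k < d" "xs ! w k = n" for k
  proof (rule ccontr)
    assume "w k \<noteq> d - 1"
    then have "w k < d - 1" using w_less[OF that(1)] by simp
    then have "xs ! w k < xs ! (d - 1)" using less_iff[of "w k" "d - 1"] d by simp
    then show False using that last_le by simp
  qed
  have "\<not> xs ! 0 = Suc (xs ! w 0)"
    using less_iff[OF w_less[OF d] d] by simp
  then have "xs ! w 0 = n" using step[OF d] by blast
  then have w0: "w 0 = d - 1" and last: "xs ! (d - 1) = n"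
    using top[OF d] by simp_all
  have below: "w k = k - 1 \<and> xs ! k = Suc (xs ! (k - 1))" if k: "0 < k" "k < d" for k
  proof -
    have "w k \<noteq> w 0" using permutes_inj[OF w] k by (auto dest: injD)
    then have "xs ! w k \<noteq> n" using top[OF k(2)] w0 by auto
    then have up: "xs ! k = Suc (xs ! w k)" using step[OF k(2)] by blast
    then have "w k < k" using less_iff[OF w_less[OF k(2)] k(2)] by simp
    moreover have "\<not> w k < k - 1"
    proof
      assume "w k < k - 1"
      then have "xs ! w k < xs ! (k - 1)" using less_iff[of "w k" "k - 1"] k by simp
      moreover have "xs ! (k - 1) < xs ! k" using less_iff[of "k - 1" k] k by simp
      ultimately show False using up by simp
    qed
    ultimately have "w k = k - 1" by simp
    then show ?thesis using up by simp
  qed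
  show "xs = [n + 1 - d..<n + 1]"
    using below by (intro upt_eq_if_consecutive[OF len d last]) blast
  show "w = down_cycle d"
  proof
    fix k
    consider "k = 0" | "0 < k" "k < d" | "d \<le> k" by linarith
    then show "w k = down_cycle d k"
    proof cases
      case 1
      then show ?thesis using w0 by (simp add: down_cycle_def)
    next
      case 2
      then show ?thesis using below[OF 2] by (simp add: down_cycle_def)
    next
      case 3
      then show ?thesis using permutes_not_in[OF w, of k] d by (simp add: down_cycle_def)
    qed
  qed
qed

definition top_subcomp :: "(nat \<Rightarrow> nat) \<Rightarrow> nat \<Rightarrow> nat \<Rightarrow> nat \<Rightarrow> nat \<Rightarrow> nat" where
  "top_subcomp lam n b m j = (if b < j \<and> j \<le> n then lam j else if j = b then m else 0)"

lemma top_subcomp_in_subcomps: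
  "1 \<le> b \<Longrightarrow> b \<le> n \<Longrightarrow> m \<le> lam b \<Longrightarrow> top_subcomp lam n b m \<in> subcomps lam n"
  by (auto simp: subcomps_def top_subcomp_def)

lemma mpos_top_subcomp:
  assumes "\<forall>i\<in>{1..n}. 0 < lam i" "1 \<le> b" "0 < m"
  shows "mpos n (top_subcomp lam n b m) = {b..n}"
proof -
  have "top_subcomp lam n b m j \<noteq> 0 \<longleftrightarrow> b \<le> j" if "j \<in> {1..n}" for j
    using assms that by (auto simp: top_subcomp_def)
  then show ?thesis using assms(2) by (auto simp: mpos_def)
qed

lemma msize_top_subcomp:
  assumes "1 \<le> b" "b \<le> n"
  shows "msize n (top_subcomp lam n b m) = m + (\<Sum>j\<in>{b<..n}. lam j)"
proof -
  have "msize n (top_subcomp lam n b m) = (\<Sum>j\<in>{b..n}. top_subcomp lam n b m j)"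
    unfolding msize_def using assms
    by (intro sum.mono_neutral_right) (auto simp: top_subcomp_def)
  also have "\<dots> = top_subcomp lam n b m b + (\<Sum>j\<in>{b<..n}. top_subcomp lam n b m j)"
    using assms by (simp add: atLeastAtMost_insertL[symmetric] atLeastSucAtMost_greaterThanAtMost[symmetric])
  also have "\<dots> = m + (\<Sum>j\<in>{b<..n}. lam j)"
    by (simp add: top_subcomp_def)
  finally show ?thesis .
qed

lemma subcomp_eq_top_subcomp:
  assumes "\<mu> \<in> subcomps lam n" "mpos n \<mu> = {b..n}" "\<And>j. b < j \<Longrightarrow> j \<le> n \<Longrightarrow> \<mu> j = lam j"
  shows "\<mu> = top_subcomp lam n b (\<mu> b)"
proof
  fix j
  show "\<mu> j = top_subcomp lam n b (\<mu> b) j"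
  proof (cases "j \<in> {b..n}")
    case True
    then show ?thesis using assms(3) by (auto simp: top_subcomp_def)
  next
    case False
    have "\<mu> j = 0"
    proof (cases "j \<in> {1..n}")
      case True
      then show ?thesis using False assms(2) by (auto simp: mpos_def)
    next
      case False
      then show ?thesis using assms(1) by (simp add: subcomps_def)
    qed
    then show ?thesis using False by (auto simp: top_subcomp_def)
  qed
qed

lemma finite_subcomps: "finite (subcomps lam n)"
proof (rule finite_subset)
  let ?F = "{f. \<forall>x. (x \<in> {1..n} \<longrightarrow> f x \<in> {0..Max (lam ` {1..n})}) \<and> (x \<notin> {1..n} \<longrightarrow> f x = (0::nat))}"
  show "subcomps lam n \<subseteq> ?F"
  proof (intro subsetI CollectI allI conjI impI)
    fix f x assume f: "f \<in> subcomps lam n"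
    show "f x \<in> {0..Max (lam ` {1..n})}" if x: "x \<in> {1..n}"
    proof -
      have "f x \<le> lam x" using f x by (simp add: subcomps_def)
      also have "lam x \<le> Max (lam ` {1..n})" using x by (intro Max_ge) auto
      finally show ?thesis by simp
    qed
    show "f x = 0" if "x \<notin> {1..n}"
      using f that by (simp add: subcomps_def)
  qed
  show "finite ?F"
    by (rule finite_set_of_finite_funs) auto
qed

section \<open>The restriction of \<open>x\<^sub>r\<close>\<close>

context
  fixes lam :: "nat \<Rightarrow> nat" and n r :: nat
  assumes pos: "\<forall>i\<in>{1..n}. 0 < lam i"
    and mono: "\<forall>i j. 1 \<le> i \<longrightarrow> i \<le> j \<longrightarrow> j \<le> n \<longrightarrow> lam i \<le> lam j"
    and r: "r \<in> {1..bigN lam n}"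
begin

abbreviation "d_r \<equiv> dr lam n r"
abbreviation "b_r \<equiv> n + 1 - d_r"
abbreviation "m_r \<equiv> r - tail_sum lam n (d_r - 1)"

lemma block_facts:
  shows "1 \<le> d_r" "d_r \<le> n" "1 \<le> b_r" "b_r \<le> n" "b_r + d_r = n + 1" "1 \<le> m_r" "m_r \<le> lam b_r"
    and "r = m_r + (\<Sum>j\<in>{b_r<..n}. lam j)"
proof -
  have d: "1 \<le> d_r" "d_r \<le> n" "tail_sum lam n (d_r - 1) < r" "r \<le> tail_sum lam n d_r"
    using dr_bounds[OF r] by simp_all
  have "tail_sum lam n d_r = lam b_r + tail_sum lam n (d_r - 1)"
    using tail_sum_Suc[of "d_r - 1" n lam] d by (simp add: Suc_diff_Suc)
  then show "m_r \<le> lam b_r" using d(4) by arith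
  have "{n + 1 - (d_r - 1)..n} = {b_r<..n}" using d by auto
  then have "tail_sum lam n (d_r - 1) = (\<Sum>j\<in>{b_r<..n}. lam j)" by (simp add: tail_sum_def)
  then show "r = m_r + (\<Sum>j\<in>{b_r<..n}. lam j)" using d(3) by simp
  show "1 \<le> d_r" "d_r \<le> n" "1 \<le> b_r" "b_r \<le> n" "b_r + d_r = n + 1" "1 \<le> m_r"
    using d by auto
qed

lemma top_subcomp_in_xr_range:
  "top_subcomp lam n b_r m_r \<in> {\<mu> \<in> subcomps lam n. msize n \<mu> = r \<and> mlen n \<mu> = d_r}"
proof -
  note I = block_facts
  have "top_subcomp lam n b_r m_r \<in> subcomps lam n"
    using I by (intro top_subcomp_in_subcomps) auto
  moreover have "msize n (top_subcomp lam n b_r m_r) = r"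
    using msize_top_subcomp[OF I(3,4)] I(8) by simp
  moreover have "mlen n (top_subcomp lam n b_r m_r) = d_r"
    using mpos_top_subcomp[OF pos I(3), of m_r] I(5,6) by (simp add: mlen_def)
  ultimately show ?thesis by simp
qed

lemma rho_xr_term_nonzero_imp:
  assumes \<mu>: "\<mu> \<in> subcomps lam n" "msize n \<mu> = r" "mlen n \<mu> = d_r"
    and w: "w permutes {0..<d_r}"
    and nonzero: "rho lam n (xr_term lam n d_r \<mu> w) \<noteq> 0"
  shows "\<mu> = top_subcomp lam n b_r m_r \<and> w = down_cycle d_r"
proof -
  note I = block_facts
  define xs where "xs = sorted_list_of_set (mpos n \<mu>)"
  have fin: "finite (mpos n \<mu>)" by (simp add: mpos_def)
  have len: "length xs = d_r" using \<mu>(3) fin by (simp add: xs_def mlen_def)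
  have set_xs: "set xs = mpos n \<mu>" using fin by (simp add: xs_def)
  have in_range: "1 \<le> xs ! k \<and> xs ! k \<le> n \<and> 1 \<le> \<mu> (xs ! k) \<and> \<mu> (xs ! k) \<le> lam (xs ! k)"
    if "k < d_r" for k
    using nth_mem[of k xs] that len set_xs \<mu>(1) by (auto simp: mpos_def subcomps_def)
  have w_less: "w k < d_r" if "k < d_r" for k
    using permutes_in_image[OF w] that by simp
  have factor: "xs ! w k = n \<or> (xs ! k = Suc (xs ! w k) \<and> \<mu> (xs ! k) = lam (xs ! k))"
    if k: "k < d_r" for k
  proof (rule ccontr)
    assume "\<not> ?thesis"
    then have "rho lam n (e_elt lam (xs ! w k) (xs ! k) (\<mu> (xs ! k) - 1)) = 0"
      using rho_e_elt[OF pos mono, of "xs ! w k" "xs ! k" "\<mu> (xs ! k)"]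
        in_range[OF k] in_range[OF w_less[OF k]] by auto
    then have "rho lam n (xr_term lam n d_r \<mu> w) = 0"
      using k by (auto simp: rho_xr_term xs_def[symmetric] Let_def intro: prod_zero)
    with nonzero show False by contradiction
  qed
  have sorted: "sorted_wrt (<) xs" by (simp add: xs_def strict_sorted_list_of_set)
  have "set xs \<subseteq> {..n}" using in_range len by (auto simp: in_set_conv_nth)
  moreover have "xs ! w k = n \<or> xs ! k = Suc (xs ! w k)" if "k < d_r" for k
    using factor[OF that] by blast
  ultimately have forced: "w = down_cycle d_r" "xs = [b_r..<n + 1]"
    using permutation_forced_down_cycle[OF sorted len _ _ w] I(1) by simp_all
  have mpos: "mpos n \<mu> = {b_r..n}"
    using set_xs forced(2) by auto
  have full: "\<mu> j = lam j" if j: "b_r < j" "j \<le> n" for j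
  proof -
    define k where "k = j - b_r"
    have k: "0 < k" "k < d_r" using j I(5) by (auto simp: k_def)
    have "xs ! k = j" "xs ! w k = j - 1"
      using forced j k I(5) by (auto simp: k_def down_cycle_def nth_upt simp del: upt_Suc)
    then show ?thesis using factor[OF k(2)] j by auto
  qed
  have \<mu>_top: "\<mu> = top_subcomp lam n b_r (\<mu> b_r)"
    by (rule subcomp_eq_top_subcomp[OF \<mu>(1) mpos full])
  then have "msize n \<mu> = \<mu> b_r + (\<Sum>j\<in>{b_r<..n}. lam j)"
    using msize_top_subcomp[OF I(3,4), of lam "\<mu> b_r"] by simp
  then have "\<mu> b_r = m_r" using \<mu>(2) I(8) by simp
  then show ?thesis using \<mu>_top forced(1) by simp
qed

lemma rho_xr_term_top:
  "rho lam n (xr_term lam n d_r (top_subcomp lam n b_r m_r) (down_cycle d_r)) = mp_var (b_r, m_r - 1)"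
proof -
  note I = block_facts
  let ?\<mu> = "top_subcomp lam n b_r m_r" and ?xs = "[b_r..<n + 1]"
  have xs: "sorted_list_of_set (mpos n ?\<mu>) = ?xs"
    using mpos_top_subcomp[OF pos I(3), of m_r] I(6)
    by (simp add: atLeastLessThanSuc_atLeastAtMost[symmetric] del: upt_Suc)
  define f :: "nat \<Rightarrow> (nat \<times> nat, 'a) mpoly"
    where "f k = rho lam n (e_elt lam (?xs ! down_cycle d_r k) (?xs ! k) (?\<mu> (?xs ! k) - 1))" for k
  obtain d' where d': "d_r = Suc d'" using I(1) by (cases d_r) auto
  have first: "f 0 = mp_var (b_r, m_r - 1)"
    using rho_e_elt[OF pos mono, of n b_r m_r] I
    by (simp add: f_def down_cycle_def nth_upt top_subcomp_def del: upt_Suc)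
  have later: "f (Suc k) = 1" if k: "k < d'" for k
  proof -
    have "b_r + k \<in> {1..n}" "b_r + k + 1 \<in> {1..n}" "b_r + k \<noteq> n" using k d' I(3,5) by auto
    moreover have "1 \<le> lam (b_r + k + 1)" using pos \<open>b_r + k + 1 \<in> {1..n}\<close> by (simp add: Suc_le_eq)
    ultimately show ?thesis
      using rho_e_elt[OF pos mono, of "b_r + k" "b_r + k + 1" "lam (b_r + k + 1)"] k d'
      by (simp add: f_def down_cycle_def nth_upt top_subcomp_def del: upt_Suc)
  qed
  from xs have "rho lam n (xr_term lam n d_r ?\<mu> (down_cycle d_r)) = (\<Prod>k<d_r. f k)"
    by (simp add: rho_xr_term Let_def f_def del: upt_Suc)
  also have "\<dots> = f 0 * (\<Prod>k<d'. f (Suc k))"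
    unfolding d' by (rule prod.lessThan_Suc_shift)
  also have "\<dots> = mp_var (b_r, m_r - 1)"
    using first later by simp
  finally show ?thesis .
qed

lemma rho_xr: "rho lam n (xr lam n r) = of_int (sign (down_cycle d_r)) * mp_var (coord_of_index lam n r)"
proof -
  define M where "M = {\<mu> \<in> subcomps lam n. msize n \<mu> = r \<and> mlen n \<mu> = d_r}"
  define W where "W = {w. w permutes {0..<d_r}}"
  define t :: "(nat \<Rightarrow> nat) \<Rightarrow> (nat \<Rightarrow> nat) \<Rightarrow> (nat \<times> nat, 'a::comm_ring_1) mpoly"
    where "t \<mu> w = of_int (sign w) * rho lam n (xr_term lam n d_r \<mu> w)" for \<mu> w
  let ?\<mu> = "top_subcomp lam n b_r m_r" and ?w = "down_cycle d_r"
  have fin: "finite M" "finite W"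
    using finite_subcomps by (auto simp: M_def W_def finite_permutations)
  have mem: "?\<mu> \<in> M" "?w \<in> W"
    using top_subcomp_in_xr_range down_cycle_permutes by (simp_all add: M_def W_def)
  have vanish: "t \<mu> w = 0" if "\<mu> \<in> M" "w \<in> W" "\<mu> \<noteq> ?\<mu> \<or> w \<noteq> ?w" for \<mu> w
  proof -
    have "\<mu> \<in> subcomps lam n" "msize n \<mu> = r" "mlen n \<mu> = d_r" "w permutes {0..<d_r}"
      using that(1,2) by (simp_all add: M_def W_def)
    then have "rho lam n (xr_term lam n d_r \<mu> w) = (0 :: (nat \<times> nat, 'a) mpoly)"
      using rho_xr_term_nonzero_imp that(3) by blast
    then show ?thesis by (simp add: t_def)
  qed
  have "rho lam n (xr lam n r) = (\<Sum>\<mu>\<in>M. \<Sum>w\<in>W. t \<mu> w)"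
    by (simp add: xr_eq_sum_xr_term rho_def mp_subst_sum mp_subst_mult M_def W_def t_def)
  also have "\<dots> = (\<Sum>w\<in>W. t ?\<mu> w)"
    using fin mem vanish by (subst sum.mono_neutral_right[of M "{?\<mu>}"]) auto
  also have "\<dots> = t ?\<mu> ?w"
    using fin mem vanish by (subst sum.mono_neutral_right[of W "{?w}"]) auto
  also have "\<dots> = of_int (sign ?w) * mp_var (b_r, m_r - 1)"
    by (simp only: t_def rho_xr_term_top)
  finally show ?thesis by (simp add: coord_of_index_def)
qed

end

theorem lemma4p2:
  fixes lam :: "nat \<Rightarrow> nat" and n :: nat
  assumes pos: "\<forall>i\<in>{1..n}. 0 < lam i"
    and mono: "\<forall>i j. 1 \<le> i \<longrightarrow> i \<le> j \<longrightarrow> j \<le> n \<longrightarrow> lam i \<le> lam j"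
  shows "(\<forall>P :: (nat, 'a::{alg_closed_field, field_char_0}) mpoly.
            mp_vars P \<subseteq> {1..bigN lam n} \<longrightarrow> Phi lam n P = 0 \<longrightarrow> P = 0)
       \<and> (\<forall>q :: (nat \<times> nat, 'a) mpoly. mp_vars q \<subseteq> Scoords lam n \<longrightarrow>
            (\<exists>P. mp_vars P \<subseteq> {1..bigN lam n} \<and> Phi lam n P = q))"
proof -
  let ?\<sigma> = "\<lambda>k. if k \<in> {1..bigN lam n} then rho lam n (xr lam n k) else (0 :: (nat \<times> nat, 'a) mpoly)"
  have \<sigma>: "?\<sigma> k = of_int (sign (down_cycle (dr lam n k))) * mp_var (coord_of_index lam n k)"
    if "k \<in> {1..bigN lam n}" for k
    using rho_xr[OF pos mono that] that by simp
  have "sign (down_cycle (dr lam n k)) \<in> {1, -1 :: int}" for k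
    by (simp add: sign_def)
  from mp_subst_signed_renaming[OF bij_betw_coord_of_index \<sigma> this]
  show ?thesis unfolding Phi_def by blast
qed

end
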